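(* Let $\mathcal{X}$ be a measurable space, $K\ge 1$, and let classifiers be measurable maps $\mathcal{X}\to[K]=\{1,\dots,K\}$. Let $\mathcal{B}$ assign to each $x\in\mathcal{X}$ a set $\mathcal{B}(x)\subseteq\mathcal{X}$, and for $V\subseteq\mathcal{X}$ let $\mathcal{N}(V)=\{x\in\mathcal{X}:\exists x'\in V \text{ with } \mathcal{B}(x)\cap\mathcal{B}(x')\neq\emptyset\}$. Fix a classifier $G_{pl}$ (the pseudo-labeler). Let $Q$ be a probability measure on $\mathcal{X}$ satisfying the $c$-expansion property for a non-increasing function $c:[0,1]\to(0,\infty)$, i.e. $Q(\mathcal{N}(S))\ge c(Q(S))\,Q(S)$ for every measurable $S\subseteq\mathcal{X}$. Let $H$ be a classifier and put $\gamma_H=c\big(Q(\{x\in\mathcal{X}:G_{pl}(x)\neq H(x)\})\big)$, and assume $\gamma_H>1$. For a classifier $F$ let $\mathcal{S}_{\mathcal{B}}(F)=\{x\in\mathcal{X}: F(x)=F(x')\ \forall x'\in\mathcal{B}(x)\}$ and let $\mathcal{S}_{\mathcal{B}}^c(F)$ be its complement. For a classifier $F$ define $$\mathcal{L}_{Q,H}(F)=\frac{\gamma_H+1}{\gamma_H-1}Q(\{x:F(x)\neq G_{pl}(x)\})+\frac{2\gamma_H}{\gamma_H-1}Q(\mathcal{S}_{\mathcal{B}}^c(F))+\frac{2\gamma_H}{\gamma_H-1}Q(\mathcal{S}_{\mathcal{B}}^c(H))-Q(\{x:G_{pl}(x)\neq H(x)\}).$$ Then for every classifier $F$, $Q(\{x\in\mathcal{X}:F(x)\neq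 H(x)\})\le\mathcal{L}_{Q,H}(F)$.
   Context: All sets considered are assumed measurable. $\mathcal{B}(x)$ is interpreted as the set of (augmented) neighbors of $x$; $\mathcal{N}(V)$ is the neighborhood of a set $V$. *)

theory Defs
  imports "HOL-Probability.Probability"
begin

definition classifier :: "'a measure \<Rightarrow> nat \<Rightarrow> ('a \<Rightarrow> nat) \<Rightarrow> bool" where
  "classifier M K F \<longleftrightarrow> F \<in> M \<rightarrow>\<^sub>M count_space {1..K}"

definition nbhd :: "'a measure \<Rightarrow> ('a \<Rightarrow> 'a set) \<Rightarrow> 'a set \<Rightarrow> 'a set" where
  "nbhd M B V = {x \<in> space M. \<exists>x'\<in>V. B x \<inter> B x' \<noteq> {}}"

definition robust_set :: "'a measure \<Rightarrow> ('a \<Rightarrow> 'a set) \<Rightarrow> ('a \<Rightarrow> nat) \<Rightarrow> 'a set" where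
  "robust_set M B F = {x \<in> space M. \<forall>x'\<in>B x. F x = F x'}"

definition c_expansion :: "'a measure \<Rightarrow> ('a \<Rightarrow> 'a set) \<Rightarrow> (real \<Rightarrow> real) \<Rightarrow> bool" where
  "c_expansion M B c \<longleftrightarrow>
     (\<forall>S \<in> sets M. measure M (nbhd M B S) \<ge> c (measure M S) * measure M S)"

definition disagree :: "'a measure \<Rightarrow> ('a \<Rightarrow> nat) \<Rightarrow> ('a \<Rightarrow> nat) \<Rightarrow> 'a set" where
  "disagree M F G = {x \<in> space M. F x \<noteq> G x}"

definition LQH :: "'a measure \<Rightarrow> ('a \<Rightarrow> 'a set) \<Rightarrow> real \<Rightarrow> ('a \<Rightarrow> nat) \<Rightarrow> ('a \<Rightarrow> nat)
    \<Rightarrow> ('a \<Rightarrow> nat) \<Rightarrow> real" where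
  "LQH M B \<gamma> Gpl H F =
     (\<gamma> + 1) / (\<gamma> - 1) * measure M (disagree M F Gpl)
   + 2 * \<gamma> / (\<gamma> - 1) * measure M (space M - robust_set M B F)
   + 2 * \<gamma> / (\<gamma> - 1) * measure M (space M - robust_set M B H)
   - measure M (disagree M Gpl H)"

end

theory Submission
  imports Defs
begin

text \<open>
  Let \<open>A\<close> be the set where \<open>F\<close> and \<open>H\<close> disagree, \<open>D\<close> the set where the pseudo-labeler
  and \<open>H\<close> disagree, and \<open>R\<close> the set where both \<open>F\<close> and \<open>H\<close> are robust. A point of \<open>R\<close>
  in the neighbourhood of \<open>U = A \<inter> D \<inter> R\<close> lies in \<open>A\<close>: \<open>F\<close> and \<open>H\<close> are constant on the
  neighbourhoods of both points, and these neighbourhoods meet. Since \<open>Q(U) \<le> Q(D)\<close> and \<open>c\<close>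
  is non-increasing, expansion gives \<open>\<gamma> Q(U) \<le> Q(N(U)) \<le> Q(U) + Q(A - D) + Q(space - R)\<close>,
  while \<open>Q(A \<inter> D) \<le> Q(U) + Q(space - R)\<close>. Eliminating \<open>Q(U)\<close> yields
  \<open>(\<gamma> - 1)(Q(A) + Q(D)) \<le> (\<gamma> + 1)(Q(A - D) + Q(D - A)) + 2\<gamma> Q(space - R)\<close>, and
  \<open>A - D\<close>, \<open>D - A\<close> are disjoint subsets of the set where \<open>F\<close> and the pseudo-labeler disagree.
\<close>

lemma classifier_measurable_nat:
  assumes "classifier M K F"
  shows "F \<in> M \<rightarrow>\<^sub>M count_space UNIV"
  using assms unfolding classifier_def
  by (rule measurable_compose) simp

lemma sets_disagree:
  assumes "classifier M K F" "classifier M K G"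
  shows "disagree M F G \<in> sets M"
proof -
  have "(\<lambda>x. (F x, G x)) \<in> M \<rightarrow>\<^sub>M count_space UNIV \<Otimes>\<^sub>M count_space UNIV"
    using assms by (intro measurable_Pair classifier_measurable_nat)
  then have "(\<lambda>x. (F x, G x)) \<in> M \<rightarrow>\<^sub>M count_space UNIV"
    by (simp add: pair_measure_countable)
  then have "Measurable.pred M (\<lambda>x. (F x, G x) \<in> {p. fst p \<noteq> snd p})"
    by (rule pred_sets2[rotated]) simp
  then show ?thesis
    unfolding disagree_def pred_def by simp
qed

lemma nbhd_robust_subset_disagree:
  fixes B :: "'a \<Rightarrow> 'a set" and F H :: "'a \<Rightarrow> nat"
  assumes "V \<subseteq> disagree M F H"
  defines "R \<equiv> robust_set M B F \<inter> robust_set M B H"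
  shows "nbhd M B (V \<inter> R) \<inter> R \<subseteq> disagree M F H"
proof
  fix x assume x: "x \<in> nbhd M B (V \<inter> R) \<inter> R"
  then obtain x' z where x': "x' \<in> V \<inter> R" and z: "z \<in> B x" "z \<in> B x'"
    unfolding nbhd_def by blast
  with assms have "F z \<noteq> H z"
    unfolding disagree_def robust_set_def by auto
  moreover from x z(1) have "F x = F z" "H x = H z"
    unfolding R_def robust_set_def by auto
  ultimately show "x \<in> disagree M F H"
    using x unfolding R_def disagree_def robust_set_def by auto
qed

lemma (in finite_measure) measure_disagree_diff_add_le:
  assumes "classifier M K F" "classifier M K G" "classifier M K H"
  shows "measure M (disagree M F H - disagree M G H) + measure M (disagree M G H - disagree M F H)
           \<le> measure M (disagree M F G)"
proof -
  have sets: "disagree M F H \<in> sets M" "disagree M G H \<in> sets M" "disagree M F G \<in> sets M"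
    using assms sets_disagree by blast+
  have "measure M (disagree M F H - disagree M G H) + measure M (disagree M G H - disagree M F H)
          = measure M ((disagree M F H - disagree M G H) \<union> (disagree M G H - disagree M F H))"
    using sets by (intro finite_measure_Union[symmetric]) auto
  also have "\<dots> \<le> measure M (disagree M F G)"
    by (intro finite_measure_mono sets(3)) (auto simp: disagree_def)
  finally show ?thesis .
qed

lemma (in prob_space) expansion_measure_ge:
  assumes "c_expansion M B c"
    and antitone: "\<And>s t. s \<in> {0..1} \<Longrightarrow> t \<in> {0..1} \<Longrightarrow> s \<le> t \<Longrightarrow> c t \<le> c s"
    and "U \<subseteq> V" "U \<in> sets M" "V \<in> sets M"
  shows "c (measure M V) * measure M U \<le> measure M (nbhd M B U)"
proof -
  have "c (measure M V) \<le> c (measure M U)"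
    using assms by (intro antitone) (auto intro: finite_measure_mono)
  then have "c (measure M V) * measure M U \<le> c (measure M U) * measure M U"
    by (simp add: mult_right_mono)
  also have "\<dots> \<le> measure M (nbhd M B U)"
    using assms unfolding c_expansion_def by blast
  finally show ?thesis .
qed

lemma (in prob_space) expansion_disagreement_bound:
  fixes A D R :: "'a set" and c :: "real \<Rightarrow> real"
  defines "\<gamma> \<equiv> c (measure M D)"
  assumes "c_expansion M B c"
    and "\<And>s t. s \<in> {0..1} \<Longrightarrow> t \<in> {0..1} \<Longrightarrow> s \<le> t \<Longrightarrow> c t \<le> c s"
    and "\<gamma> \<ge> 1" "A \<in> sets M" "D \<in> sets M" "R \<in> sets M"
    and nbhd_core: "nbhd M B (A \<inter> D \<inter> R) \<inter> R \<subseteq> A"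
  shows "(\<gamma> - 1) * (measure M A + measure M D)
           \<le> (\<gamma> + 1) * (measure M (A - D) + measure M (D - A)) + 2 * \<gamma> * measure M (space M - R)"
proof -
  define U where "U = A \<inter> D \<inter> R"
  have sets: "U \<in> sets M" "A - D \<in> sets M" "space M - R \<in> sets M"
    using assms unfolding U_def by auto
  have "\<gamma> * measure M U \<le> measure M (nbhd M B U)"
    unfolding \<gamma>_def using assms sets by (intro expansion_measure_ge) (auto simp: U_def)
  also have "\<dots> \<le> measure M (U \<union> (A - D) \<union> (space M - R))"
    using nbhd_core sets by (intro finite_measure_mono) (auto simp: U_def nbhd_def)
  also have "\<dots> \<le> measure M U + measure M (A - D) + measure M (space M - R)"
    using measure_Un_le[of U M "A - D"] measure_Un_le[of "U \<union> (A - D)" M "space M - R"] sets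
    by auto
  finally have expansion: "(\<gamma> - 1) * measure M U \<le> measure M (A - D) + measure M (space M - R)"
    by (simp add: algebra_simps)
  have "measure M (A \<inter> D) \<le> measure M (U \<union> (space M - R))"
    using sets sets.sets_into_space[OF \<open>A \<in> sets M\<close>]
    by (intro finite_measure_mono) (auto simp: U_def)
  also have "\<dots> \<le> measure M U + measure M (space M - R)"
    using sets by (intro measure_Un_le) auto
  finally have "(\<gamma> - 1) * measure M (A \<inter> D) \<le> (\<gamma> - 1) * (measure M U + measure M (space M - R))"
    using assms by (intro mult_left_mono) auto
  with expansion have overlap:
    "(\<gamma> - 1) * measure M (A \<inter> D) \<le> measure M (A - D) + \<gamma> * measure M (space M - R)"
    by (simp add: algebra_simps)
  have "measure M A = measure M (A \<inter> D) + measure M (A - D)"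
    "measure M D = measure M (A \<inter> D) + measure M (D - A)"
    using assms by (simp_all add: finite_measure_Diff' Int_commute)
  then have "(\<gamma> - 1) * (measure M A + measure M D)
      = 2 * ((\<gamma> - 1) * measure M (A \<inter> D)) + (\<gamma> - 1) * (measure M (A - D) + measure M (D - A))"
    by (simp add: algebra_simps)
  also have "\<dots> \<le> 2 * (measure M (A - D) + \<gamma> * measure M (space M - R))
      + (\<gamma> - 1) * (measure M (A - D) + measure M (D - A))"
    using overlap by simp
  also have "\<dots> \<le> (\<gamma> + 1) * (measure M (A - D) + measure M (D - A)) + 2 * \<gamma> * measure M (space M - R)"
    using measure_nonneg[of M "D - A"] by (simp add: algebra_simps)
  finally show ?thesis .
qed

lemma measure_le_LQH_iff:
  assumes "\<gamma> > 1"
  shows "measure M (disagree M F H) \<le> LQH M B \<gamma> Gpl H F \<longleftrightarrow>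
    (\<gamma> - 1) * (measure M (disagree M F H) + measure M (disagree M Gpl H))
      \<le> (\<gamma> + 1) * measure M (disagree M F Gpl)
        + 2 * \<gamma> * (measure M (space M - robust_set M B F) + measure M (space M - robust_set M B H))"
    (is "?q \<le> _ \<longleftrightarrow> (\<gamma> - 1) * (?q + ?d) \<le> ?bound")
proof -
  have "LQH M B \<gamma> Gpl H F = ?bound / (\<gamma> - 1) - ?d"
    using assms unfolding LQH_def by (simp add: divide_simps distrib_left)
  with assms show ?thesis
    by (simp add: le_diff_eq pos_le_divide_eq mult.commute)
qed

theorem mainTheorem1:
  fixes Q :: "'a measure" and K :: nat and B :: "'a \<Rightarrow> 'a set"
    and Gpl H :: "'a \<Rightarrow> nat" and c :: "real \<Rightarrow> real"
  assumes "prob_space Q"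
    and "K \<ge> 1"
    and "\<And>x. x \<in> space Q \<Longrightarrow> B x \<subseteq> space Q"
    and meas_nbhd: "\<And>S. S \<in> sets Q \<Longrightarrow> nbhd Q B S \<in> sets Q"
    and meas_robust: "\<And>F. classifier Q K F \<Longrightarrow> robust_set Q B F \<in> sets Q"
    and "classifier Q K Gpl"
    and "\<And>t. t \<in> {0..1} \<Longrightarrow> c t > 0"
    and "\<And>s t. s \<in> {0..1} \<Longrightarrow> t \<in> {0..1} \<Longrightarrow> s \<le> t \<Longrightarrow> c t \<le> c s"
    and "c_expansion Q B c"
    and "classifier Q K H"
    and "c (measure Q (disagree Q Gpl H)) > 1"
  shows "\<forall>F. classifier Q K F \<longrightarrow>
           measure Q (disagree Q F H)
             \<le> LQH Q B (c (measure Q (disagree Q Gpl H))) Gpl H F"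
proof (intro allI impI)
  fix F assume F: "classifier Q K F"
  interpret prob_space Q by fact
  define \<gamma> where "\<gamma> = c (measure Q (disagree Q Gpl H))"
  have robust: "robust_set Q B F \<in> sets Q" "robust_set Q B H \<in> sets Q"
    using meas_robust F assms(10) by blast+
  let ?R = "robust_set Q B F \<inter> robust_set Q B H"
  have nbhd_core: "nbhd Q B (disagree Q F H \<inter> disagree Q Gpl H \<inter> ?R) \<inter> ?R \<subseteq> disagree Q F H"
    by (rule nbhd_robust_subset_disagree) auto
  have "(\<gamma> - 1) * (measure Q (disagree Q F H) + measure Q (disagree Q Gpl H))
      \<le> (\<gamma> + 1) * (measure Q (disagree Q F H - disagree Q Gpl H)
                    + measure Q (disagree Q Gpl H - disagree Q F H))
        + 2 * \<gamma> * measure Q (space Q - ?R)"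
    unfolding \<gamma>_def using assms(11) robust sets_disagree[OF F assms(10)] sets_disagree[OF assms(6,10)]
    by (intro expansion_disagreement_bound[OF assms(9,8) _ _ _ _ nbhd_core]) auto
  also have "\<dots> \<le> (\<gamma> + 1) * measure Q (disagree Q F Gpl)
      + 2 * \<gamma> * (measure Q (space Q - robust_set Q B F) + measure Q (space Q - robust_set Q B H))"
    using assms(11) measure_disagree_diff_add_le[OF F assms(6,10)]
      measure_Un_le[of "space Q - robust_set Q B F" Q "space Q - robust_set Q B H"] robust
    by (intro add_mono mult_left_mono) (auto simp: \<gamma>_def Diff_Int)
  finally show "measure Q (disagree Q F H) \<le> LQH Q B \<gamma> Gpl H F"
    using assms(11) by (simp add: measure_le_LQH_iff \<gamma>_def)
qed

end
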